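(* Let $D=(0,1)$, $\alpha\in(3/2,2)$, $\mu\ge\alpha$, $f\in L^2(D)$, $q\in L^\infty(D)$, $c_0=\Gamma(\mu+1)/\Gamma(1+\mu-\alpha)$ and $p(x)=c_0x^{\mu-\alpha}-q(x)x^\mu$. Assume the bilinear form $A(\psi,\varphi)=(\psi',\varphi')+({}_0^RD_x^{2-\alpha}\psi,q\varphi)+({}_0^RD_x^{2-\alpha}\psi)(1)(p,\varphi)$ on $V=H^1_0(D)$ satisfies: $A(w,v)=0\ \forall v\in V\Rightarrow w=0$, and $A(w,v)=0\ \forall w\in V\Rightarrow v=0$. Let $w\in V$ be the unique solution of $A(w,\varphi)=(f,\varphi)$ for all $\varphi\in V$ (the weak form of $-w''+q\,{}_0^RD_x^{2-\alpha}w+({}_0^RD_x^{2-\alpha}w)(1)(c_0x^{\mu-\alpha}-qx^\mu)=f$, $w(0)=w(1)=0$). Then $$u={}_0^RD_x^{2-\alpha}w-({}_0^RD_x^{2-\alpha}w)(1)\,x^\mu$$ is a solution of $-{}_0^RD_x^{\alpha}u+qu=f$ in $D$ (as an identity in $L^2(D)$), $u(0)=u(1)=0$.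
   Context: $(\cdot,\cdot)$ is the $L^2(D)$ inner product. $({}_0I_x^\gamma g)(x)=\frac{1}{\Gamma(\gamma)}\int_0^x(x-t)^{\gamma-1}g(t)dt$ for $\gamma>0$. For $w\in H^1_0(D)$, ${}_0^RD_x^{2-\alpha}w=\frac{d}{dx}({}_0I_x^{\alpha-1}w)={}_0I_x^{\alpha-1}(w')$, and $({}_0^RD_x^{2-\alpha}w)(1)=\frac{1}{\Gamma(\alpha-1)}\int_0^1(1-t)^{\alpha-2}w'(t)dt$. The Riemann–Liouville derivative of order $\alpha\in(1,2)$ is ${}_0^RD_x^\alpha u=\frac{d^2}{dx^2}({}_0I_x^{2-\alpha}u)$. *)

theory Defs
  imports "HOL-Analysis.Analysis"
begin

abbreviation dom01 :: "real set" where "dom01 \<equiv> {0<..<1}"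

definition L2D :: "(real \<Rightarrow> real) \<Rightarrow> bool" where
  "L2D f \<longleftrightarrow> set_borel_measurable lborel dom01 f
      \<and> set_integrable lborel dom01 (\<lambda>x. (f x)^2)"

definition LinfD :: "(real \<Rightarrow> real) \<Rightarrow> bool" where
  "LinfD q \<longleftrightarrow> set_borel_measurable lborel dom01 q
      \<and> (\<exists>C. AE x in lborel. x \<in> dom01 \<longrightarrow> \<bar>q x\<bar> \<le> C)"

definition ip :: "(real \<Rightarrow> real) \<Rightarrow> (real \<Rightarrow> real) \<Rightarrow> real" where
  "ip f g = (LINT x:dom01|lborel. f x * g x)"

text \<open>H^1_0(D), continuous representative: w is the primitive of its weak
  derivative dw \<in> L2(D), starting at 0, and w(1) = 0.\<close>
definition H10 :: "(real \<Rightarrow> real) \<Rightarrow> (real \<Rightarrow> real) \<Rightarrow> bool" where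
  "H10 w dw \<longleftrightarrow> L2D dw
      \<and> (\<forall>x\<in>{0..1}. w x = (LINT t:{0<..<x}|lborel. dw t))
      \<and> w 1 = 0"

definition frac_int :: "real \<Rightarrow> (real \<Rightarrow> real) \<Rightarrow> real \<Rightarrow> real" where
  "frac_int \<gamma> g x = (1 / Gamma \<gamma>) * (LINT t:{0<..<x}|lborel. (x - t) powr (\<gamma> - 1) * g t)"

text \<open>For w in H^1_0 with weak derivative dw:
  RL derivative of order 2 - alpha, i.e. I^(alpha-1) (w').\<close>
definition rl_D2a :: "real \<Rightarrow> (real \<Rightarrow> real) \<Rightarrow> real \<Rightarrow> real" where
  "rl_D2a \<alpha> dw = frac_int (\<alpha> - 1) dw"

definition Aform :: "real \<Rightarrow> (real \<Rightarrow> real) \<Rightarrow> (real \<Rightarrow> real) \<Rightarrow> (real \<Rightarrow> real)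
    \<Rightarrow> (real \<Rightarrow> real) \<Rightarrow> (real \<Rightarrow> real) \<Rightarrow> real" where
  "Aform \<alpha> q p dpsi phi dphi =
     ip dpsi dphi + ip (rl_D2a \<alpha> dpsi) (\<lambda>x. q x * phi x) + rl_D2a \<alpha> dpsi 1 * ip p phi"

text \<open>h is the Riemann-Liouville derivative of order alpha of u in the sense
  h = d^2/dx^2 (I^(2-alpha) u) on D, derivatives taken in the weak
  (absolutely continuous) sense.\<close>
definition RL_deriv_is :: "real \<Rightarrow> (real \<Rightarrow> real) \<Rightarrow> (real \<Rightarrow> real) \<Rightarrow> bool" where
  "RL_deriv_is \<alpha> u h \<longleftrightarrow>
     (\<exists>g1 a b. set_integrable lborel dom01 g1 \<and> set_integrable lborel dom01 h
        \<and> (\<forall>x\<in>dom01. frac_int (2 - \<alpha>) u x = a + (LINT t:{0<..<x}|lborel. g1 t))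
        \<and> (\<forall>x\<in>dom01. g1 x = b + (LINT t:{0<..<x}|lborel. h t)))"

end

theory Submission
  imports Defs
begin

text \<open>Testing the weak equation against \<open>H\<^sup>1\<^sub>0\<close> functions and integrating by parts
  shows, by the du Bois-Reymond lemma, that \<open>w' = m - \<integral>\<^sub>0\<^sup>x G\<close> almost everywhere, where
  \<open>G = f - q D\<^bsup>2-\<alpha>\<^esup>w - c p\<close> with \<open>c = (D\<^bsup>2-\<alpha>\<^esup>w)(1)\<close> is integrable: since \<open>\<alpha> > 3/2\<close>
  the kernel of \<open>I\<^bsup>\<alpha>-1\<^esup>\<close> is square integrable, so \<open>D\<^bsup>2-\<alpha>\<^esup>w = I\<^bsup>\<alpha>-1\<^esup>w'\<close> is bounded.
  Hence \<open>w'\<close> has a continuous representative \<open>v\<close>, and \<open>u = I\<^bsup>\<alpha>-1\<^esup>v - c x\<^sup>\<mu>\<close> is continuous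
  and vanishes at both ends. The semigroup law \<open>I\<^bsup>2-\<alpha>\<^esup>I\<^bsup>\<alpha>-1\<^esup> = I\<^sup>1\<close> and
  \<open>I\<^bsup>2-\<alpha>\<^esup>x\<^sup>\<mu> = \<Gamma>(\<mu>+1)/\<Gamma>(\<mu>+3-\<alpha>) x\<^bsup>\<mu>+2-\<alpha>\<^esup>\<close> give
  \<open>I\<^bsup>2-\<alpha>\<^esup>u = w - c c\<^sub>0 x\<^bsup>\<mu>+2-\<alpha>\<^esup> / ((\<mu>+1-\<alpha>)(\<mu>+2-\<alpha>))\<close>, whose second derivative
  is \<open>-G - c c\<^sub>0 x\<^bsup>\<mu>-\<alpha>\<^esup> = q u - f\<close>: the \<open>c\<^sub>0\<close>-term of \<open>p\<close> is designed to cancel.\<close>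

lemma abs_mult_le_sum_squares: "\<bar>a * b\<bar> \<le> a\<^sup>2 + (b::real)\<^sup>2"
proof -
  have "0 \<le> (\<bar>a\<bar> - \<bar>b\<bar>)\<^sup>2" by simp
  then have "2 * (\<bar>a\<bar> * \<bar>b\<bar>) \<le> \<bar>a\<bar>\<^sup>2 + \<bar>b\<bar>\<^sup>2" by (simp add: power2_diff algebra_simps)
  moreover have "0 \<le> \<bar>a\<bar> * \<bar>b\<bar>" by simp
  ultimately show ?thesis unfolding abs_mult power2_abs by linarith
qed

lemma set_borel_measurable_mult:
  fixes f g :: "'a \<Rightarrow> real"
  assumes "set_borel_measurable M S f" "set_borel_measurable M S g"
  shows "set_borel_measurable M S (\<lambda>x. f x * g x)"
proof -
  have "(\<lambda>x. (indicator S x *\<^sub>R f x) * (indicator S x *\<^sub>R g x)) \<in> borel_measurable M"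
    using assms unfolding set_borel_measurable_def by measurable
  also have "(\<lambda>x. (indicator S x *\<^sub>R f x) * (indicator S x *\<^sub>R g x)) = (\<lambda>x. indicator S x *\<^sub>R (f x * g x))"
    by (auto simp: indicator_def)
  finally show ?thesis unfolding set_borel_measurable_def .
qed

lemma set_borel_measurable_add:
  fixes f g :: "'a \<Rightarrow> real"
  assumes "set_borel_measurable M S f" "set_borel_measurable M S g"
  shows "set_borel_measurable M S (\<lambda>x. f x + g x)"
proof -
  have "(\<lambda>x. (indicator S x *\<^sub>R f x) + (indicator S x *\<^sub>R g x)) \<in> borel_measurable M"
    using assms unfolding set_borel_measurable_def by measurable
  then show ?thesis unfolding set_borel_measurable_def by (simp add: distrib_left)
qed

lemma set_borel_measurable_diff:
  fixes f g :: "'a \<Rightarrow> real"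
  assumes "set_borel_measurable M S f" "set_borel_measurable M S g"
  shows "set_borel_measurable M S (\<lambda>x. f x - g x)"
proof -
  have "(\<lambda>x. (indicator S x *\<^sub>R f x) - (indicator S x *\<^sub>R g x)) \<in> borel_measurable M"
    using assms unfolding set_borel_measurable_def by measurable
  then show ?thesis unfolding set_borel_measurable_def by (simp add: right_diff_distrib)
qed

lemma set_borel_measurable_const:
  assumes "S \<in> sets M" shows "set_borel_measurable M S (\<lambda>x. c::real)"
  using assms unfolding set_borel_measurable_def by measurable

lemma set_borel_measurable_continuous_on_subset:
  fixes f :: "real \<Rightarrow> real"
  assumes "continuous_on T f" "S \<subseteq> T" "S \<in> sets borel"
  shows "set_borel_measurable lborel S f"
proof -
  have "continuous_on S f" by (rule continuous_on_subset[OF assms(1,2)])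
  then have "set_borel_measurable borel S f" by (intro set_measurable_continuous_on assms(3))
  then show ?thesis unfolding set_borel_measurable_def by simp
qed

lemma set_integral_nonneg:
  fixes f :: "'a \<Rightarrow> real"
  assumes "\<And>x. x \<in> A \<Longrightarrow> 0 \<le> f x"
  shows "0 \<le> (LINT x:A|M. f x)"
  unfolding set_lebesgue_integral_def
  by (rule Bochner_Integration.integral_nonneg) (use assms in \<open>auto simp: indicator_def\<close>)

lemma set_integrable_mult_bounded:
  fixes g k :: "'a \<Rightarrow> real"
  assumes "set_integrable M S g" "set_borel_measurable M S k"
    "AE x in M. x \<in> S \<longrightarrow> \<bar>k x\<bar> \<le> C"
  shows "set_integrable M S (\<lambda>x. k x * g x)"
proof (rule set_integrable_bound[where f="\<lambda>x. C * \<bar>g x\<bar>"])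
  show "set_integrable M S (\<lambda>x. C * \<bar>g x\<bar>)"
    using set_integrable_abs[OF assms(1)] by auto
  show "set_borel_measurable M S (\<lambda>x. k x * g x)"
    using assms(1,2) by (intro set_borel_measurable_mult)
      (auto simp: set_integrable_def set_borel_measurable_def)
  show "AE x in M. x \<in> S \<longrightarrow> norm (k x * g x) \<le> norm (C * \<bar>g x\<bar>)"
    using assms(3) by eventually_elim
      (auto simp: abs_mult intro: mult_right_mono order_trans[OF _ abs_ge_self])
qed

lemma set_integrable_const_dom01: "set_integrable lborel dom01 (\<lambda>x. c::real)"
  unfolding set_integrable_def
  using integrable_real_indicator[of "dom01" lborel] by (simp add: integrable_mult_left)

lemma set_integral_const_dom01: "(LINT x:dom01|lborel. (c::real)) = c"
  by (subst set_integral_const) auto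

lemma set_integrable_bounded_dom01:
  fixes g :: "real \<Rightarrow> real"
  assumes "set_borel_measurable lborel dom01 g" "AE x in lborel. x \<in> dom01 \<longrightarrow> \<bar>g x\<bar> \<le> C"
  shows "set_integrable lborel dom01 g"
  using set_integrable_mult_bounded[OF set_integrable_const_dom01[of 1] assms] by simp

lemma set_integrable_initial_segment:
  fixes g :: "real \<Rightarrow> real"
  assumes "set_integrable lborel dom01 g" "x \<le> 1"
  shows "set_integrable lborel {0<..<x} g"
  by (rule set_integrable_subset[OF assms(1)]) (use assms(2) in auto)

lemma set_lebesgue_integral_Ioo_eq_if:
  "(LINT s:{a<..<b}|lborel. f s) = (LINT s|lborel. (if a < s \<and> s < b then f s else (0::real)))"
  unfolding set_lebesgue_integral_def
  by (intro Bochner_Integration.integral_cong) (auto simp: indicator_def)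

lemma set_integral_Ioo_split:
  fixes G :: "real \<Rightarrow> real"
  assumes G: "set_integrable lborel {a<..<b} G" and t: "a \<le> t" "t \<le> b"
  shows "(LINT s:{a<..<b}|lborel. G s) = (LINT s:{a<..<t}|lborel. G s) + (LINT s:{t<..<b}|lborel. G s)"
proof -
  have m: "set_borel_measurable lborel {a<..<b} G"
    using G by (simp add: set_integrable_def set_borel_measurable_def borel_measurable_integrable)
  have "(LINT s:{a<..<b}|lborel. G s) = (LINT s:{a<..<t} \<union> {t<..<b}|lborel. G s)"
  proof (rule set_integral_cong_set[symmetric])
    show "set_borel_measurable lborel ({a<..<t} \<union> {t<..<b}) G"
      by (rule set_borel_measurable_subset[OF m]) (use t in auto)
    show "AE x in lborel. (x \<in> {a<..<b}) = (x \<in> {a<..<t} \<union> {t<..<b})"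
      using AE_lborel_singleton[of t] by eventually_elim (use t in auto)
  qed fact
  also have "\<dots> = (LINT s:{a<..<t}|lborel. G s) + (LINT s:{t<..<b}|lborel. G s)"
    by (rule set_integral_Un) (use t in \<open>auto intro!: set_integrable_subset[OF G]\<close>)
  finally show ?thesis .
qed

lemma continuous_on_primitive_Icc01:
  fixes g :: "real \<Rightarrow> real"
  assumes g: "set_integrable lborel dom01 g"
  shows "continuous_on {0..1} (\<lambda>x. LINT t:{0<..<x}|lborel. g t)"
proof -
  have "g integrable_on {0<..<1}" using set_borel_integral_eq_integral(1)[OF g] .
  then have "g integrable_on {0..1}" by (simp add: integrable_on_Icc_iff_Ioo)
  then have "continuous_on {0..1} (\<lambda>x. integral {0..x} g)"
    by (rule indefinite_integral_continuous_1)
  moreover have "integral {0..x} g = (LINT t:{0<..<x}|lborel. g t)" if "x \<in> {0..1}" for x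
    using set_borel_integral_eq_integral(2)[OF set_integrable_initial_segment[OF g, of x]] that
    by (simp add: integral_open_interval_real)
  ultimately show ?thesis by (rule continuous_on_eq) auto
qed

lemma set_integral_Ioo_cong_AE:
  fixes g v k :: "real \<Rightarrow> real"
  assumes g: "set_borel_measurable lborel dom01 g" and v[measurable]: "v \<in> borel_measurable borel"
    and k[measurable]: "k \<in> borel_measurable borel"
    and ae: "AE t in lborel. t \<in> dom01 \<longrightarrow> g t = v t" and x: "x \<le> 1"
  shows "(LINT t:{0<..<x}|lborel. k t * g t) = (LINT t:{0<..<x}|lborel. k t * v t)"
proof -
  have [measurable]: "(\<lambda>t. indicator dom01 t * g t) \<in> borel_measurable borel"
    using g by (simp add: set_borel_measurable_def)
  have "(LINT t:{0<..<x}|lborel. k t * g t) = (LINT t:{0<..<x}|lborel. k t * (indicator dom01 t * g t))"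
    by (rule set_lebesgue_integral_cong) (use x in \<open>auto simp: indicator_def\<close>)
  also have "\<dots> = (LINT t:{0<..<x}|lborel. k t * v t)"
  proof (rule set_lebesgue_integral_cong_AE)
    show "AE t\<in>{0<..<x} in lborel. k t * (indicator dom01 t * g t) = k t * v t"
      using ae by eventually_elim (use x in \<open>auto simp: indicator_def\<close>)
  qed measurable
  finally show ?thesis .
qed

lemma L2D_measurable: "L2D g \<Longrightarrow> set_borel_measurable lborel dom01 g"
  by (simp add: L2D_def)

lemma L2D_mult_integrable:
  assumes "L2D g" "L2D h" shows "set_integrable lborel dom01 (\<lambda>x. g x * h x)"
proof (rule set_integrable_bound[OF _ set_borel_measurable_mult[OF L2D_measurable[OF assms(1)] L2D_measurable[OF assms(2)]]])
  show "set_integrable lborel dom01 (\<lambda>x. (g x)\<^sup>2 + (h x)\<^sup>2)"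
    using assms by (simp add: L2D_def)
  have "\<bar>g x * h x\<bar> \<le> \<bar>(g x)\<^sup>2 + (h x)\<^sup>2\<bar>" for x
    using abs_mult_le_sum_squares[of "g x" "h x"] by simp
  then show "AE x in lborel. x \<in> dom01 \<longrightarrow> norm (g x * h x) \<le> norm ((g x)\<^sup>2 + (h x)\<^sup>2)" by auto
qed

lemma L2D_imp_integrable:
  assumes "L2D g" shows "set_integrable lborel dom01 g"
proof -
  have "L2D (\<lambda>x. 1)"
    unfolding L2D_def by (simp add: set_borel_measurable_const set_integrable_const_dom01)
  then show ?thesis using L2D_mult_integrable[OF assms] by fastforce
qed

lemma L2D_add:
  assumes "L2D g" "L2D h" shows "L2D (\<lambda>x. g x + h x)"
  unfolding L2D_def
proof
  show "set_borel_measurable lborel dom01 (\<lambda>x. g x + h x)"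
    using assms by (intro set_borel_measurable_add L2D_measurable)
  have "(\<lambda>x. (g x + h x)\<^sup>2) = (\<lambda>x. (g x)\<^sup>2 + (2 * (g x * h x) + (h x)\<^sup>2))"
    by (auto simp: power2_eq_square algebra_simps)
  moreover have "set_integrable lborel dom01 (\<lambda>x. (g x)\<^sup>2 + (2 * (g x * h x) + (h x)\<^sup>2))"
    using assms L2D_mult_integrable[OF assms]
    by (intro set_integral_add set_integrable_mult_right) (auto simp: L2D_def)
  ultimately show "set_integrable lborel dom01 (\<lambda>x. (g x + h x)\<^sup>2)" by simp
qed

lemma L2D_cmult:
  assumes "L2D g" shows "L2D (\<lambda>x. c * g x)"
  using assms set_borel_measurable_mult[OF set_borel_measurable_const L2D_measurable[OF assms]]
  unfolding L2D_def by (simp add: power_mult_distrib)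

lemma L2D_diff:
  assumes "L2D g" "L2D h" shows "L2D (\<lambda>x. g x - h x)"
  using L2D_add[OF assms(1) L2D_cmult[OF assms(2), of "-1"]] by simp

lemma LinfD_imp_L2D:
  assumes "LinfD g" shows "L2D g"
proof -
  obtain C where C: "AE x in lborel. x \<in> dom01 \<longrightarrow> \<bar>g x\<bar> \<le> C"
    and m: "set_borel_measurable lborel dom01 g"
    using assms by (auto simp: LinfD_def)
  have "set_integrable lborel dom01 (\<lambda>x. (g x)\<^sup>2)"
  proof (rule set_integrable_bounded_dom01[where C="C\<^sup>2"])
    show "set_borel_measurable lborel dom01 (\<lambda>x. (g x)\<^sup>2)"
      using set_borel_measurable_mult[OF m m] by (simp add: power2_eq_square)
    show "AE x in lborel. x \<in> dom01 \<longrightarrow> \<bar>(g x)\<^sup>2\<bar> \<le> C\<^sup>2"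
      using C by eventually_elim
        (auto simp: abs_le_square_iff intro: power_mono[of "\<bar>_\<bar>" C 2, simplified])
  qed
  then show ?thesis using m by (simp add: L2D_def)
qed

lemma LinfD_imp_integrable: "LinfD g \<Longrightarrow> set_integrable lborel dom01 g"
  unfolding LinfD_def using set_integrable_bounded_dom01 by blast

lemma LinfD_mult_integrable:
  assumes "LinfD k" "set_integrable lborel dom01 g"
  shows "set_integrable lborel dom01 (\<lambda>x. k x * g x)"
  using assms set_integrable_mult_bounded[OF assms(2)] unfolding LinfD_def by blast

lemma LinfD_const: "LinfD (\<lambda>x. c)"
  unfolding LinfD_def by (auto intro: set_borel_measurable_const)

lemma LinfD_powr:
  assumes "0 \<le> e" shows "LinfD (\<lambda>x. x powr e)"
proof -
  have "\<bar>x powr e\<bar> \<le> 1" if "x \<in> dom01" for x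
    using that assms by (auto intro: powr_le1)
  moreover have "set_borel_measurable lborel dom01 (\<lambda>x. x powr e)"
    unfolding set_borel_measurable_def by measurable
  ultimately show ?thesis unfolding LinfD_def by auto
qed

lemma LinfD_mult:
  assumes "LinfD g" "LinfD k" shows "LinfD (\<lambda>x. g x * k x)"
proof -
  obtain A B where A: "AE x in lborel. x \<in> dom01 \<longrightarrow> \<bar>g x\<bar> \<le> A"
    and B: "AE x in lborel. x \<in> dom01 \<longrightarrow> \<bar>k x\<bar> \<le> B"
    using assms by (auto simp: LinfD_def)
  have "AE x in lborel. x \<in> dom01 \<longrightarrow> \<bar>g x * k x\<bar> \<le> \<bar>A\<bar> * \<bar>B\<bar>"
    using A B by eventually_elim (auto simp: abs_mult intro!: mult_mono)
  then show ?thesis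
    using assms by (auto simp: LinfD_def intro: set_borel_measurable_mult)
qed

lemma LinfD_diff:
  assumes "LinfD g" "LinfD k" shows "LinfD (\<lambda>x. g x - k x)"
proof -
  obtain A B where A: "AE x in lborel. x \<in> dom01 \<longrightarrow> \<bar>g x\<bar> \<le> A"
    and B: "AE x in lborel. x \<in> dom01 \<longrightarrow> \<bar>k x\<bar> \<le> B"
    using assms by (auto simp: LinfD_def)
  have "AE x in lborel. x \<in> dom01 \<longrightarrow> \<bar>g x - k x\<bar> \<le> A + B"
    using A B by eventually_elim auto
  then show ?thesis
    using assms by (auto simp: LinfD_def intro: set_borel_measurable_diff)
qed

lemma continuous_on_imp_LinfD:
  fixes g :: "real \<Rightarrow> real"
  assumes "continuous_on {0..1} g" shows "LinfD g"
proof -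
  obtain B where "\<And>x. x \<in> {0..1} \<Longrightarrow> norm (g x) \<le> B"
    using continuous_on_compact_bound[OF compact_Icc assms] by metis
  then have "AE x in lborel. x \<in> dom01 \<longrightarrow> \<bar>g x\<bar> \<le> B" by auto
  moreover have "set_borel_measurable lborel dom01 g"
    by (rule set_borel_measurable_continuous_on_subset[OF assms]) auto
  ultimately show ?thesis unfolding LinfD_def by auto
qed

lemma H10_continuous: "H10 \<phi> d\<phi> \<Longrightarrow> continuous_on {0..1} \<phi>"
  unfolding H10_def
  by (auto intro: continuous_on_eq[OF continuous_on_primitive_Icc01[OF L2D_imp_integrable]])

lemma Beta_integral_01:
  fixes a b :: real assumes a: "a > 0" and b: "b > 0"
  shows "set_integrable lborel {0<..<1} (\<lambda>r. r powr (a-1) * (1-r) powr (b-1))"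
    and "(LINT r:{0<..<1}|lborel. r powr (a-1) * (1-r) powr (b-1)) = Beta a b"
proof -
  show 1: "set_integrable lborel {0<..<1} (\<lambda>r. r powr (a-1) * (1-r) powr (b-1))"
    by (rule set_integrable_subset[OF integrable_Beta[OF a b]]) auto
  have "((\<lambda>r. r powr (a-1) * (1-r) powr (b-1)) has_integral Beta a b) {0<..<1}"
    using has_integral_Beta_real[OF a b] by (simp add: has_integral_Icc_iff_Ioo)
  then show "(LINT r:{0<..<1}|lborel. r powr (a-1) * (1-r) powr (b-1)) = Beta a b"
    using set_borel_integral_eq_integral(2)[OF 1] by (simp add: integral_unique)
qed

lemma Beta_kernel_affine_substitution:
  fixes a b x y r :: real
  assumes xy: "y < x"
  defines "L \<equiv> x - y"
  shows "indicator {y<..<x} (y + L * r) * ((x - (y + L * r)) powr (a - 1) * ((y + L * r) - y) powr (b - 1))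
       = L powr (a + b - 2) * (indicator {0<..<1} r * (r powr (b - 1) * (1 - r) powr (a - 1)))"
proof (cases "r \<in> {0<..<1}")
  case True
  have L: "L > 0" using xy by (simp add: L_def)
  then have "L * r < L * 1" "0 < L * r" using True by (simp_all add: mult_strict_left_mono)
  then have "y + L * r \<in> {y<..<x}" by (auto simp: L_def)
  moreover have "x - (y + L * r) = L * (1 - r)" by (simp add: L_def algebra_simps)
  moreover have "(L * (1 - r)) powr (a - 1) = L powr (a - 1) * (1 - r) powr (a - 1)"
    using True L by (auto intro!: powr_mult)
  moreover have "(L * r) powr (b - 1) = L powr (b - 1) * r powr (b - 1)"
    using True L by (auto intro!: powr_mult)
  moreover have "L powr (a + b - 2) = L powr (a - 1) * L powr (b - 1)"
    by (simp add: powr_add[symmetric])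
  ultimately show ?thesis using True by simp
next
  case False
  have "L > 0" using xy by (simp add: L_def)
  then have "L * r \<le> 0 \<or> L * 1 \<le> L * r"
    using False by (auto intro: mult_nonneg_nonpos mult_left_mono)
  then have "y + L * r \<notin> {y<..<x}" by (auto simp: L_def)
  then show ?thesis using False by simp
qed

lemma Beta_integral_shifted:
  fixes a b x y :: real assumes a: "a > 0" and b: "b > 0" and xy: "y < x"
  shows "set_integrable lborel {y<..<x} (\<lambda>s. (x - s) powr (a - 1) * (s - y) powr (b - 1))"
    and "(LINT s:{y<..<x}|lborel. (x - s) powr (a - 1) * (s - y) powr (b - 1)) = Beta a b * (x - y) powr (a + b - 1)"
proof -
  define L where "L = x - y"
  have L: "L > 0" using xy by (simp add: L_def)
  define F where "F = (\<lambda>s. indicator {y<..<x} s *\<^sub>R ((x - s) powr (a - 1) * (s - y) powr (b - 1)))"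
  have eq: "F (y + L * r) = L powr (a + b - 2) * (indicator {0<..<1} r *\<^sub>R (r powr (b - 1) * (1 - r) powr (a - 1)))" for r
    using Beta_kernel_affine_substitution[OF xy, of r a b] by (simp add: F_def L_def)
  have "integrable lborel (\<lambda>r. indicator {0<..<1} r *\<^sub>R (r powr (b - 1) * (1 - r) powr (a - 1)))"
    using Beta_integral_01(1)[OF b a] by (simp add: set_integrable_def)
  then have "integrable lborel (\<lambda>r. F (y + L * r))"
    unfolding eq by simp
  then have "integrable lborel F"
    using lborel_integrable_real_affine_iff[of L F y] L by simp
  then show "set_integrable lborel {y<..<x} (\<lambda>s. (x - s) powr (a - 1) * (s - y) powr (b - 1))"
    by (simp add: set_integrable_def F_def)
  have "integral\<^sup>L lborel F = L * integral\<^sup>L lborel (\<lambda>r. F (y + L * r))"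
    using lborel_integral_real_affine[of L F y] L by simp
  also have "\<dots> = L * (L powr (a + b - 2) * Beta b a)"
    unfolding eq using Beta_integral_01(2)[OF b a] by (simp add: set_lebesgue_integral_def)
  also have "\<dots> = Beta a b * L powr (a + b - 1)"
    using L by (simp add: Beta_commute powr_diff powr_add field_simps power2_eq_square)
  finally show "(LINT s:{y<..<x}|lborel. (x - s) powr (a - 1) * (s - y) powr (b - 1))
      = Beta a b * (x - y) powr (a + b - 1)"
    by (simp add: set_lebesgue_integral_def F_def L_def)
qed

lemma Gamma_plus1_real: "(z::real) > 0 \<Longrightarrow> Gamma (z + 1) = z * Gamma z"
  by (rule Gamma_plus1) (auto elim!: nonpos_Ints_cases)

lemma Beta_1_left: assumes "(b::real) > 0" shows "Beta 1 b = 1 / b"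
proof -
  have g: "Gamma b \<noteq> 0" using Gamma_real_pos[OF assms] by simp
  show ?thesis using Gamma_plus1_real[OF assms] g by (simp add: Beta_def add.commute)
qed

lemma set_integral_powr_Ioo:
  fixes e x :: real assumes e: "e > -1" and x: "0 < x"
  shows "set_integrable lborel {0<..<x} (\<lambda>t. t powr e)"
    and "(LINT t:{0<..<x}|lborel. t powr e) = x powr (e + 1) / (e + 1)"
proof -
  have eq: "\<And>t. t \<in> {0<..<x} \<Longrightarrow> (x - t) powr (1 - 1) * (t - 0) powr ((e+1) - 1) = t powr e"
    by simp
  show "set_integrable lborel {0<..<x} (\<lambda>t. t powr e)"
    using Beta_integral_shifted(1)[of 1 "e+1" 0 x] e x
    by (subst set_integrable_cong[OF refl refl eq[symmetric]]) auto
  have "(LINT t:{0<..<x}|lborel. t powr e) = (LINT t:{0<..<x}|lborel. (x - t) powr (1 - 1) * (t - 0) powr ((e+1) - 1))"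
    by (rule set_lebesgue_integral_cong) (use eq in auto)
  also have "\<dots> = x powr (e + 1) / (e + 1)"
    using Beta_integral_shifted(2)[of 1 "e+1" 0 x] e x Beta_1_left[of "e+1"] by (simp add: add.commute)
  finally show "(LINT t:{0<..<x}|lborel. t powr e) = x powr (e + 1) / (e + 1)" .
qed

lemma set_integral_kernel_square:
  fixes \<beta> x :: real
  assumes b: "1/2 < \<beta>" and x: "0 < x"
  shows "set_integrable lborel {0<..<x} (\<lambda>t. ((x - t) powr (\<beta> - 1))\<^sup>2)"
    and "(LINT t:{0<..<x}|lborel. ((x - t) powr (\<beta> - 1))\<^sup>2) = Beta (2*\<beta> - 1) 1 * x powr (2*\<beta> - 1)"
proof -
  have e: "(x - t) powr ((2*\<beta> - 1) - 1) * (t - 0) powr (1 - 1) = ((x - t) powr (\<beta> - 1))\<^sup>2"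
    if "t \<in> {0<..<x}" for t
    using that by (simp add: power2_eq_square powr_add[symmetric] algebra_simps)
  show "set_integrable lborel {0<..<x} (\<lambda>t. ((x - t) powr (\<beta> - 1))\<^sup>2)"
    using Beta_integral_shifted(1)[of "2*\<beta> - 1" 1 0 x] b x
    by (subst set_integrable_cong[OF refl refl e[symmetric]]) auto
  have "(LINT t:{0<..<x}|lborel. ((x - t) powr (\<beta> - 1))\<^sup>2)
      = (LINT t:{0<..<x}|lborel. (x - t) powr ((2*\<beta> - 1) - 1) * (t - 0) powr (1 - 1))"
    by (rule set_lebesgue_integral_cong) (use e in auto)
  then show "(LINT t:{0<..<x}|lborel. ((x - t) powr (\<beta> - 1))\<^sup>2) = Beta (2*\<beta> - 1) 1 * x powr (2*\<beta> - 1)"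
    using Beta_integral_shifted(2)[of "2*\<beta> - 1" 1 0 x] b x by simp
qed

lemma set_integral_abs_mult_le_sum_squares:
  fixes k g :: "'a \<Rightarrow> real"
  assumes k: "set_integrable M A (\<lambda>t. (k t)\<^sup>2)" and g: "set_integrable M A (\<lambda>t. (g t)\<^sup>2)"
    and m: "set_borel_measurable M A (\<lambda>t. k t * g t)"
  shows "\<bar>LINT t:A|M. k t * g t\<bar> \<le> (LINT t:A|M. (k t)\<^sup>2) + (LINT t:A|M. (g t)\<^sup>2)"
proof -
  have sI: "set_integrable M A (\<lambda>t. (k t)\<^sup>2 + (g t)\<^sup>2)" using k g by (rule set_integral_add)
  have I: "set_integrable M A (\<lambda>t. k t * g t)"
    by (rule set_integrable_bound[OF sI m]) (auto intro: order_trans[OF abs_mult_le_sum_squares])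
  have "\<bar>LINT t:A|M. k t * g t\<bar> \<le> (LINT t:A|M. \<bar>k t * g t\<bar>)"
    using set_integral_norm_bound[OF I] by simp
  also have "\<dots> \<le> (LINT t:A|M. (k t)\<^sup>2 + (g t)\<^sup>2)"
    using set_integrable_abs[OF I] sI abs_mult_le_sum_squares by (intro set_integral_mono) auto
  also have "\<dots> = (LINT t:A|M. (k t)\<^sup>2) + (LINT t:A|M. (g t)\<^sup>2)"
    using k g by simp
  finally show ?thesis .
qed

lemma set_integral_swap_triangle:
  fixes F :: "real \<Rightarrow> real \<Rightarrow> real" and x :: real
  assumes meas[measurable]: "(\<lambda>p. F (fst p) (snd p)) \<in> borel_measurable (borel \<Otimes>\<^sub>M borel)"
    and bound: "set_integrable lborel {0<..<x} (\<lambda>t. LINT s:{t<..<x}|lborel. \<bar>F t s\<bar>)"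
    and inner: "\<And>t. t \<in> {0<..<x} \<Longrightarrow> set_integrable lborel {t<..<x} (\<lambda>s. F t s)"
  shows "(LINT s:{0<..<x}|lborel. LINT t:{0<..<s}|lborel. F t s)
       = (LINT t:{0<..<x}|lborel. LINT s:{t<..<x}|lborel. F t s)"
proof -
  define H where "H = (\<lambda>t s. indicator {0<..<x} t * indicator {t<..<x} s * F t s)"
  have H3: "H = (\<lambda>t s. if 0 < t \<and> t < x \<and> t < s \<and> s < x then F t s else 0)"
    by (auto simp: H_def indicator_def intro!: ext)
  have H2: "H t s = indicator {0<..<x} s * indicator {0<..<s} t * F t s" for t s
    by (auto simp: H_def indicator_def)
  have Hm: "(\<lambda>p. H (fst p) (snd p)) \<in> borel_measurable (lborel \<Otimes>\<^sub>M lborel)"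
    unfolding H3 by measurable
  have "integrable (lborel \<Otimes>\<^sub>M lborel) (\<lambda>p. H (fst p) (snd p))"
  proof (rule lborel_pair.Fubini_integrable[OF Hm])
    have "(\<lambda>t. LINT s|lborel. norm (H (fst (t,s)) (snd (t,s)))) = (\<lambda>t. indicator {0<..<x} t * (LINT s:{t<..<x}|lborel. \<bar>F t s\<bar>))"
      by (auto simp: H_def indicator_def set_lebesgue_integral_def abs_mult intro!: ext)
    then show "integrable lborel (\<lambda>t. LINT s|lborel. norm (H (fst (t,s)) (snd (t,s))))"
      using bound by (simp add: set_integrable_def)
    show "AE t in lborel. integrable lborel (\<lambda>s. H (fst (t,s)) (snd (t,s)))"
    proof (intro AE_I2)
      fix t show "integrable lborel (\<lambda>s. H (fst (t,s)) (snd (t,s)))"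
      proof (cases "t \<in> {0<..<x}")
        case True
        then have "integrable lborel (\<lambda>s. indicator {0<..<x} t * (indicator {t<..<x} s *\<^sub>R F t s))"
          using inner[OF True] by (simp add: set_integrable_def)
        then show ?thesis by (simp add: H_def mult.assoc)
      qed (simp add: H_def)
    qed
  qed
  then have eq: "(LINT s|lborel. LINT t|lborel. H t s) = (LINT t|lborel. LINT s|lborel. H t s)"
    using lborel_pair.Fubini_integral[of H] by (simp add: case_prod_beta')
  have "(LINT s:{0<..<x}|lborel. LINT t:{0<..<s}|lborel. F t s) = (LINT s|lborel. LINT t|lborel. H t s)"
    unfolding H2 set_lebesgue_integral_def
    by (intro Bochner_Integration.integral_cong refl) (simp add: mult.assoc)
  also have "\<dots> = (LINT t|lborel. LINT s|lborel. H t s)" by (rule eq)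
  also have "\<dots> = (LINT t:{0<..<x}|lborel. LINT s:{t<..<x}|lborel. F t s)"
    unfolding H_def set_lebesgue_integral_def
    by (intro Bochner_Integration.integral_cong refl) (simp add: mult.assoc)
  finally show ?thesis .
qed

lemma set_integral_swap_triangle_product:
  fixes g k :: "real \<Rightarrow> real"
  assumes [measurable]: "g \<in> borel_measurable borel" "k \<in> borel_measurable borel"
    and g: "set_integrable lborel dom01 g" and k: "set_integrable lborel dom01 k"
  shows "(LINT s:dom01|lborel. LINT t:{0<..<s}|lborel. k t * g s)
       = (LINT t:dom01|lborel. LINT s:{t<..<1}|lborel. k t * g s)"
proof (rule set_integral_swap_triangle)
  show "(\<lambda>p. k (fst p) * g (snd p)) \<in> borel_measurable (borel \<Otimes>\<^sub>M borel)"
    by measurable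
  show "set_integrable lborel {t<..<1} (\<lambda>s. k t * g s)" if "t \<in> dom01" for t
  proof -
    have "set_integrable lborel {t<..<1} g"
      by (rule set_integrable_subset[OF g]) (use that in auto)
    then show ?thesis by simp
  qed
  define C where "C = (LINT s:dom01|lborel. \<bar>g s\<bar>)"
  have gA: "set_integrable lborel dom01 (\<lambda>s. \<bar>g s\<bar>)" using set_integrable_abs[OF g] .
  show "set_integrable lborel dom01 (\<lambda>t. LINT s:{t<..<1}|lborel. \<bar>k t * g s\<bar>)"
  proof (rule set_integrable_bound[where f="\<lambda>t. C * \<bar>k t\<bar>"])
    show "set_integrable lborel dom01 (\<lambda>t. C * \<bar>k t\<bar>)"
      using set_integrable_abs[OF k] by auto
    have "(\<lambda>t. LINT s|lborel. (if t < s \<and> s < 1 then \<bar>k t * g s\<bar> else 0)) \<in> borel_measurable borel"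
      by measurable
    then show "set_borel_measurable lborel dom01 (\<lambda>t. LINT s:{t<..<1}|lborel. \<bar>k t * g s\<bar>)"
      unfolding set_lebesgue_integral_Ioo_eq_if set_borel_measurable_def by measurable
    have "\<bar>LINT s:{t<..<1}|lborel. \<bar>k t * g s\<bar>\<bar> \<le> \<bar>C * \<bar>k t\<bar>\<bar>" if t: "t \<in> dom01" for t
    proof -
      have "set_integrable lborel {t<..<1} (\<lambda>s. \<bar>g s\<bar>)"
        by (rule set_integrable_subset[OF gA]) (use t in auto)
      then have "(LINT s:{t<..<1}|lborel. \<bar>g s\<bar>) \<le> C"
        unfolding C_def set_lebesgue_integral_def
        using gA t
        by (intro integral_mono) (auto simp: set_integrable_def indicator_def)
      then have "(LINT s:{t<..<1}|lborel. \<bar>k t * g s\<bar>) \<le> \<bar>k t\<bar> * C"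
        by (simp add: abs_mult mult_left_mono)
      moreover have "0 \<le> (LINT s:{t<..<1}|lborel. \<bar>k t * g s\<bar>)" "0 \<le> C"
        unfolding C_def by (auto intro: set_integral_nonneg)
      ultimately show ?thesis by (simp add: mult.commute)
    qed
    then show "AE t in lborel. t \<in> dom01 \<longrightarrow>
        norm (LINT s:{t<..<1}|lborel. \<bar>k t * g s\<bar>) \<le> norm (C * \<bar>k t\<bar>)"
      by auto
  qed
qed

lemma set_integral_mult_primitive:
  fixes G d\<phi> \<phi> :: "real \<Rightarrow> real"
  assumes G: "set_integrable lborel dom01 G" and d: "set_integrable lborel dom01 d\<phi>"
    and \<phi>: "\<And>x. x \<in> {0..1} \<Longrightarrow> \<phi> x = (LINT t:{0<..<x}|lborel. d\<phi> t)" and \<phi>1: "\<phi> 1 = 0"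
  shows "(LINT s:dom01|lborel. G s * \<phi> s) = - (LINT t:dom01|lborel. (LINT s:{0<..<t}|lborel. G s) * d\<phi> t)"
proof -
  define G' where "G' = (\<lambda>t. indicator dom01 t * G t)"
  define d' where "d' = (\<lambda>t. indicator dom01 t * d\<phi> t)"
  have G': "set_integrable lborel dom01 G'"
    using G by (rule set_integrable_cong[THEN iffD1, rotated -1]) (auto simp: G'_def)
  have d': "set_integrable lborel dom01 d'"
    using d by (rule set_integrable_cong[THEN iffD1, rotated -1]) (auto simp: d'_def)
  have [measurable]: "G' \<in> borel_measurable borel" "d' \<in> borel_measurable borel"
    using G d by (simp_all add: G'_def d'_def set_integrable_def borel_measurable_integrable)
  have "(LINT s:dom01|lborel. G s * \<phi> s) = (LINT s:dom01|lborel. LINT t:{0<..<s}|lborel. d' t * G' s)"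
  proof (rule set_lebesgue_integral_cong)
    show "\<forall>s. s \<in> dom01 \<longrightarrow> G s * \<phi> s = (LINT t:{0<..<s}|lborel. d' t * G' s)"
    proof (intro allI impI)
      fix s :: real assume s: "s \<in> dom01"
      have "G s * \<phi> s = (LINT t:{0<..<s}|lborel. G s * d\<phi> t)" using s \<phi>[of s] by simp
      also have "\<dots> = (LINT t:{0<..<s}|lborel. d' t * G' s)"
        by (rule set_lebesgue_integral_cong) (use s in \<open>auto simp: d'_def G'_def\<close>)
      finally show "G s * \<phi> s = (LINT t:{0<..<s}|lborel. d' t * G' s)" .
    qed
  qed simp
  also have "\<dots> = (LINT t:dom01|lborel. LINT s:{t<..<1}|lborel. d' t * G' s)"
    by (rule set_integral_swap_triangle_product[OF _ _ G' d']) measurable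
  also have "\<dots> = (LINT t:dom01|lborel. d\<phi> t * (LINT s:dom01|lborel. G s) - (LINT s:{0<..<t}|lborel. G s) * d\<phi> t)"
  proof (rule set_lebesgue_integral_cong)
    show "\<forall>t. t \<in> dom01 \<longrightarrow> (LINT s:{t<..<1}|lborel. d' t * G' s)
        = d\<phi> t * (LINT s:dom01|lborel. G s) - (LINT s:{0<..<t}|lborel. G s) * d\<phi> t"
    proof (intro allI impI)
      fix t :: real assume t: "t \<in> dom01"
      have "(LINT s:{t<..<1}|lborel. d' t * G' s) = (LINT s:{t<..<1}|lborel. d\<phi> t * G s)"
        by (rule set_lebesgue_integral_cong) (use t in \<open>auto simp: d'_def G'_def\<close>)
      also have "\<dots> = d\<phi> t * ((LINT s:dom01|lborel. G s) - (LINT s:{0<..<t}|lborel. G s))"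
        using set_integral_Ioo_split[OF G, of t] t by simp
      finally show "(LINT s:{t<..<1}|lborel. d' t * G' s)
          = d\<phi> t * (LINT s:dom01|lborel. G s) - (LINT s:{0<..<t}|lborel. G s) * d\<phi> t"
        by (simp add: algebra_simps)
    qed
  qed simp
  also have "\<dots> = (LINT s:dom01|lborel. G s) * (LINT t:dom01|lborel. d\<phi> t)
      - (LINT t:dom01|lborel. (LINT s:{0<..<t}|lborel. G s) * d\<phi> t)"
    using LinfD_mult_integrable[OF continuous_on_imp_LinfD[OF continuous_on_primitive_Icc01[OF G]] d] d
    by (simp add: set_integral_diff mult.commute)
  also have "(LINT t:dom01|lborel. d\<phi> t) = 0" using \<phi>[of 1] \<phi>1 by simp
  finally show ?thesis by simp
qed

lemma L2D_ip_self_eq_0: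
  assumes g: "L2D g" and "ip g g = 0"
  shows "AE t in lborel. t \<in> dom01 \<longrightarrow> g t = 0"
proof -
  have "integral\<^sup>L lborel (\<lambda>t. indicator dom01 t *\<^sub>R (g t * g t)) = 0"
    using assms(2) by (simp add: ip_def set_lebesgue_integral_def)
  then have "AE t in lborel. indicator dom01 t *\<^sub>R (g t * g t) = 0"
    using L2D_mult_integrable[OF g g]
    by (subst integral_nonneg_eq_0_iff_AE[symmetric]) (auto simp: set_integrable_def indicator_def)
  then show ?thesis
    by eventually_elim (auto simp: indicator_def split: if_splits)
qed

lemma du_Bois_Reymond:
  fixes dw G :: "real \<Rightarrow> real"
  assumes dw: "L2D dw" and G: "set_integrable lborel dom01 G"
    and weak: "\<And>\<phi> d\<phi>. H10 \<phi> d\<phi> \<Longrightarrow> ip dw d\<phi> = ip G \<phi>"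
  shows "\<exists>m. AE t in lborel. t \<in> dom01 \<longrightarrow> dw t = m - (LINT s:{0<..<t}|lborel. G s)"
proof -
  define F where "F = (\<lambda>t. LINT s:{0<..<t}|lborel. G s)"
  have FL2: "L2D F"
    unfolding F_def by (rule LinfD_imp_L2D[OF continuous_on_imp_LinfD[OF continuous_on_primitive_Icc01[OF G]]])
  define m where "m = (LINT t:dom01|lborel. dw t + F t)"
  define d\<psi> where "d\<psi> = (\<lambda>t. dw t + F t - m)"
  define \<psi> where "\<psi> = (\<lambda>x. LINT t:{0<..<x}|lborel. d\<psi> t)"
  have dL2: "L2D d\<psi>"
    unfolding d\<psi>_def by (intro L2D_diff L2D_add dw FL2 LinfD_imp_L2D[OF LinfD_const])
  have di: "set_integrable lborel dom01 d\<psi>" by (rule L2D_imp_integrable[OF dL2])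
  have sumi: "set_integrable lborel dom01 (\<lambda>t. dw t + F t)" by (intro L2D_imp_integrable L2D_add dw FL2)
  have "\<psi> 1 = (LINT t:dom01|lborel. (dw t + F t) - m)" by (simp add: \<psi>_def d\<psi>_def)
  also have "\<dots> = 0"
    using set_integral_diff(2)[OF sumi set_integrable_const_dom01[of m]]
    by (simp add: set_integral_const_dom01 m_def)
  finally have \<psi>1: "\<psi> 1 = 0" .
  have "ip dw d\<psi> = ip G \<psi>"
    by (rule weak) (use dL2 \<psi>1 in \<open>auto simp: H10_def \<psi>_def\<close>)
  also have "ip G \<psi> = - ip F d\<psi>"
    unfolding ip_def F_def
    by (rule set_integral_mult_primitive[OF G di, where \<phi>=\<psi>]) (simp_all add: \<psi>_def \<psi>1[unfolded \<psi>_def])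
  finally have orth: "ip dw d\<psi> + ip F d\<psi> = 0" by simp
  have "ip d\<psi> d\<psi> = (LINT t:dom01|lborel. (dw t * d\<psi> t + F t * d\<psi> t) - m * d\<psi> t)"
    unfolding ip_def by (rule set_lebesgue_integral_cong) (auto simp: d\<psi>_def algebra_simps)
  also have "\<dots> = (ip dw d\<psi> + ip F d\<psi>) - m * \<psi> 1"
    using L2D_mult_integrable[OF dw dL2] L2D_mult_integrable[OF FL2 dL2] di
    by (simp add: ip_def \<psi>_def set_integral_diff set_integral_add)
  finally have "ip d\<psi> d\<psi> = 0" using orth \<psi>1 by simp
  then have "AE t in lborel. t \<in> dom01 \<longrightarrow> d\<psi> t = 0" by (rule L2D_ip_self_eq_0[OF dL2])
  then have "AE t in lborel. t \<in> dom01 \<longrightarrow> dw t = m - F t"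
    by eventually_elim (simp add: d\<psi>_def algebra_simps)
  then show ?thesis unfolding F_def by blast
qed

lemma frac_int_measurable:
  fixes g :: "real \<Rightarrow> real"
  assumes g: "set_borel_measurable lborel dom01 g"
  shows "set_borel_measurable lborel dom01 (frac_int \<beta> g)"
proof -
  define g' where "g' = (\<lambda>t. indicator dom01 t * g t)"
  have [measurable]: "g' \<in> borel_measurable borel" using g by (simp add: g'_def set_borel_measurable_def real_scaleR_def)
  have m: "(\<lambda>x. indicator dom01 x * ((1 / Gamma \<beta>) * (LINT t|lborel. (if 0 < t \<and> t < x then (x - t) powr (\<beta> - 1) * g' t else 0)))) \<in> borel_measurable borel"
    by measurable
  have "indicator dom01 x * ((1 / Gamma \<beta>) * (LINT t|lborel. (if 0 < t \<and> t < x then (x - t) powr (\<beta> - 1) * g' t else 0)))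
      = indicator dom01 x *\<^sub>R frac_int \<beta> g x" for x
  proof (cases "x \<in> dom01")
    case True
    then show ?thesis
      unfolding frac_int_def set_lebesgue_integral_def
      by (auto simp: g'_def indicator_def intro!: arg_cong[where f="\<lambda>y. _ * y"] Bochner_Integration.integral_cong)
  qed simp
  then show ?thesis using m unfolding set_borel_measurable_def by simp
qed

lemma frac_kernel_L2_bound:
  fixes g :: "real \<Rightarrow> real" and \<beta> :: real
  assumes b: "1/2 < \<beta>" and g: "L2D g" and x: "0 < x" "x \<le> 1"
  shows "\<bar>LINT t:{0<..<x}|lborel. (x - t) powr (\<beta> - 1) * g t\<bar>
           \<le> Beta (2*\<beta> - 1) 1 + (LINT t:dom01|lborel. (g t)\<^sup>2)"
proof -
  have g2: "set_integrable lborel {0<..<x} (\<lambda>t. (g t)\<^sup>2)"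
    by (rule set_integrable_subset[where A=dom01]) (use g x in \<open>auto simp: L2D_def\<close>)
  have meas: "set_borel_measurable lborel {0<..<x} (\<lambda>t. (x - t) powr (\<beta> - 1) * g t)"
  proof -
    have [measurable]: "(\<lambda>t. indicator dom01 t * g t) \<in> borel_measurable borel"
      using L2D_measurable[OF g] by (simp add: set_borel_measurable_def real_scaleR_def)
    have "(\<lambda>t. indicator {0<..<x} t * ((x - t) powr (\<beta> - 1) * (indicator dom01 t * g t)))
        \<in> borel_measurable borel"
      by measurable
    moreover have "indicator {0<..<x} t * ((x - t) powr (\<beta> - 1) * (indicator dom01 t * g t))
        = indicator {0<..<x} t *\<^sub>R ((x - t) powr (\<beta> - 1) * g t)" for t
      using x by (auto simp: indicator_def)
    ultimately show ?thesis unfolding set_borel_measurable_def by simp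
  qed
  have "\<bar>LINT t:{0<..<x}|lborel. (x - t) powr (\<beta> - 1) * g t\<bar>
      \<le> (LINT t:{0<..<x}|lborel. ((x - t) powr (\<beta> - 1))\<^sup>2) + (LINT t:{0<..<x}|lborel. (g t)\<^sup>2)"
    by (rule set_integral_abs_mult_le_sum_squares[OF set_integral_kernel_square(1)[OF b x(1)] g2 meas])
  also have "\<dots> = Beta (2*\<beta> - 1) 1 * x powr (2*\<beta> - 1) + (LINT t:{0<..<x}|lborel. (g t)\<^sup>2)"
    using set_integral_kernel_square(2)[OF b x(1)] by simp
  also have "\<dots> \<le> Beta (2*\<beta> - 1) 1 + (LINT t:dom01|lborel. (g t)\<^sup>2)"
  proof (rule add_mono)
    have "0 \<le> Beta (2*\<beta> - 1) 1"
      using b by (simp add: Beta_def)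
    then show "Beta (2*\<beta> - 1) 1 * x powr (2*\<beta> - 1) \<le> Beta (2*\<beta> - 1) 1"
      using mult_left_mono[OF powr_le1[of "2*\<beta> - 1" x]] x b by simp
    show "(LINT t:{0<..<x}|lborel. (g t)\<^sup>2) \<le> (LINT t:dom01|lborel. (g t)\<^sup>2)"
      unfolding set_lebesgue_integral_def
      using g2 g x by (intro integral_mono) (auto simp: set_integrable_def indicator_def L2D_def)
  qed
  finally show ?thesis .
qed

lemma iterated_kernel_integral:
  fixes v :: "real \<Rightarrow> real" and a b x :: real
  assumes a: "a > 0" and b: "b > 0" and ab: "a + b = 1"
    and v[measurable]: "v \<in> borel_measurable borel" and vc: "continuous_on {0..1} v"
    and x: "0 < x" "x \<le> 1"
  shows "(LINT s:{0<..<x}|lborel. (x - s) powr (a - 1) * (LINT t:{0<..<s}|lborel. (s - t) powr (b - 1) * v t))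
       = Beta a b * (LINT t:{0<..<x}|lborel. v t)"
proof -
  define Ft where "Ft = (\<lambda>t s. (x - s) powr (a - 1) * ((s - t) powr (b - 1) * v t))"
  have vi: "set_integrable lborel {0<..<x} v"
    using set_integrable_initial_segment[OF LinfD_imp_integrable[OF continuous_on_imp_LinfD[OF vc]] x(2)] .
  have kernel: "(LINT s:{t<..<x}|lborel. (x - s) powr (a - 1) * (s - t) powr (b - 1)) = Beta a b"
    if "t \<in> {0<..<x}" for t
    using Beta_integral_shifted(2)[OF a b, of t x] that ab by simp
  have inner: "(LINT s:{t<..<x}|lborel. Ft t s) = Beta a b * v t" if "t \<in> {0<..<x}" for t
  proof -
    have "(LINT s:{t<..<x}|lborel. Ft t s)
        = (LINT s:{t<..<x}|lborel. (x - s) powr (a - 1) * (s - t) powr (b - 1)) * v t"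
      unfolding Ft_def set_integral_mult_left[symmetric] by (simp add: mult.assoc)
    then show ?thesis using kernel[OF that] by simp
  qed
  have inner_abs: "(LINT s:{t<..<x}|lborel. \<bar>Ft t s\<bar>) = Beta a b * \<bar>v t\<bar>" if "t \<in> {0<..<x}" for t
  proof -
    have "(LINT s:{t<..<x}|lborel. \<bar>Ft t s\<bar>)
        = (LINT s:{t<..<x}|lborel. (x - s) powr (a - 1) * (s - t) powr (b - 1)) * \<bar>v t\<bar>"
      unfolding Ft_def set_integral_mult_left[symmetric] by (simp add: abs_mult mult.assoc)
    then show ?thesis using kernel[OF that] by simp
  qed
  have "(LINT s:{0<..<x}|lborel. LINT t:{0<..<s}|lborel. Ft t s)
      = (LINT t:{0<..<x}|lborel. LINT s:{t<..<x}|lborel. Ft t s)"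
  proof (rule set_integral_swap_triangle)
    show "(\<lambda>p. Ft (fst p) (snd p)) \<in> borel_measurable (borel \<Otimes>\<^sub>M borel)"
      unfolding Ft_def by measurable
    show "set_integrable lborel {t<..<x} (Ft t)" if t: "t \<in> {0<..<x}" for t
    proof -
      have "set_integrable lborel {t<..<x} (\<lambda>s. (x - s) powr (a - 1) * (s - t) powr (b - 1) * v t)"
        using Beta_integral_shifted(1)[OF a b, of t x] t by auto
      then show ?thesis unfolding Ft_def by (simp add: mult.assoc)
    qed
    have "set_integrable lborel {0<..<x} (\<lambda>t. Beta a b * \<bar>v t\<bar>)"
      using set_integrable_abs[OF vi] by auto
    then show "set_integrable lborel {0<..<x} (\<lambda>t. LINT s:{t<..<x}|lborel. \<bar>Ft t s\<bar>)"
      by (rule set_integrable_cong[THEN iffD1, rotated -1]) (auto simp: inner_abs)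
  qed
  also have "\<dots> = (LINT t:{0<..<x}|lborel. Beta a b * v t)"
    by (rule set_lebesgue_integral_cong) (auto simp: inner)
  finally show ?thesis
    unfolding Ft_def set_integral_mult_right[symmetric] by simp
qed

lemma kernel_integral_reflect:
  fixes v :: "real \<Rightarrow> real" and \<beta> x :: real
  shows "(LINT t:{0<..<x}|lborel. (x - t) powr (\<beta> - 1) * v t)
       = (LINT s|lborel. s powr (\<beta> - 1) * (if 0 < s \<and> s < x then v (x - s) else 0))"
proof -
  define f where "f = (\<lambda>t. indicator {0<..<x} t *\<^sub>R ((x - t) powr (\<beta> - 1) * v t))"
  have "(LINT t:{0<..<x}|lborel. (x - t) powr (\<beta> - 1) * v t) = integral\<^sup>L lborel f"
    by (simp add: f_def set_lebesgue_integral_def)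
  also have "\<dots> = \<bar>-1\<bar> *\<^sub>R (LINT s|lborel. f (x + (-1) * s))"
    by (rule lborel_integral_real_affine) simp
  also have "(\<lambda>s. f (x + (-1) * s)) = (\<lambda>s. s powr (\<beta> - 1) * (if 0 < s \<and> s < x then v (x - s) else 0))"
    by (auto simp: f_def indicator_def intro!: ext)
  finally show ?thesis by simp
qed

lemma tendsto_truncated_shift:
  fixes v :: "real \<Rightarrow> real"
  assumes vc: "continuous_on {0..1} v" and u: "\<And>n. u n \<in> {0..1}" and a: "a \<in> {0..1}"
    and lim: "u \<longlonglongrightarrow> a" and s: "s \<noteq> a"
  shows "(\<lambda>n. if 0 < s \<and> s < u n then v (u n - s) else 0) \<longlonglongrightarrow> (if 0 < s \<and> s < a then v (a - s) else 0)"
proof (cases "0 < s \<and> s < a")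
  case True
  have ev: "eventually (\<lambda>n. s < u n) sequentially"
    using order_tendstoD(1)[OF lim, of s] True by simp
  have "(\<lambda>n. v (u n - s)) \<longlonglongrightarrow> v (a - s)"
  proof (rule continuous_on_tendsto_compose[OF vc])
    show "(\<lambda>n. u n - s) \<longlonglongrightarrow> a - s" by (intro tendsto_intros lim)
    show "a - s \<in> {0..1}" using True a by auto
    show "\<forall>\<^sub>F n in sequentially. u n - s \<in> {0..1}"
    proof (rule eventually_mono[OF ev])
      fix n assume "s < u n" then show "u n - s \<in> {0..1}" using u[of n] True by auto
    qed
  qed
  moreover have "eventually (\<lambda>n. v (u n - s) = (if 0 < s \<and> s < u n then v (u n - s) else 0)) sequentially"
    using ev by eventually_elim (use True in auto)
  ultimately show ?thesis using True by (simp add: Lim_transform_eventually)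
next
  case False
  then have "s \<le> 0 \<or> a < s" using s by auto
  then have "eventually (\<lambda>n. \<not> (0 < s \<and> s < u n)) sequentially"
  proof
    assume "a < s"
    then show ?thesis using order_tendstoD(2)[OF lim, of s] by (auto elim: eventually_mono)
  qed auto
  then show ?thesis using False
    by (simp add: tendsto_eventually eventually_mono del: de_Morgan_conj)
qed

lemma continuous_on_kernel_integral:
  fixes v :: "real \<Rightarrow> real" and \<beta> :: real
  assumes b: "\<beta> > 0" and v[measurable]: "v \<in> borel_measurable borel" and vc: "continuous_on {0..1} v"
  shows "continuous_on {0..1} (\<lambda>x. LINT t:{0<..<x}|lborel. (x - t) powr (\<beta> - 1) * v t)"
proof -
  obtain M where M: "\<And>t. t \<in> {0..1} \<Longrightarrow> \<bar>v t\<bar> \<le> M"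
    using continuous_on_compact_bound[OF compact_Icc vc] by (metis real_norm_def)
  define K where "K x = (LINT s|lborel. s powr (\<beta> - 1) * (if 0 < s \<and> s < x then v (x - s) else 0))" for x
  define w where "w = (\<lambda>s. indicator dom01 s * (s powr (\<beta> - 1) * M))"
  have "set_integrable lborel {0<..<1} (\<lambda>s. (1 - s) powr (1 - 1) * (s - 0) powr (\<beta> - 1))"
    using Beta_integral_shifted(1)[of 1 \<beta> 0 1] b by simp
  then have "set_integrable lborel {0<..<1} (\<lambda>s. s powr (\<beta> - 1))"
    by (rule set_integrable_cong[THEN iffD1, rotated -1]) auto
  then have wi: "integrable lborel w"
    by (simp add: w_def set_integrable_def mult.assoc[symmetric])
  have dom: "norm (s powr (\<beta> - 1) * (if 0 < s \<and> s < x then v (x - s) else 0)) \<le> w s"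
    if x: "x \<in> {0..1}" for x s
  proof (cases "0 < s \<and> s < x")
    case True
    then show ?thesis
      using x M[of "x - s"] by (auto simp: w_def abs_mult indicator_def intro!: mult_left_mono)
  next
    case False
    then show ?thesis using M[of 0] by (auto simp: w_def indicator_def)
  qed
  have "continuous_on {0..1} K"
  proof (rule continuous_on_sequentiallyI)
    fix u :: "nat \<Rightarrow> real" and a :: real
    assume u: "\<forall>n. u n \<in> {0..1}" and a: "a \<in> {0..1}" and lim: "u \<longlonglongrightarrow> a"
    show "(\<lambda>n. K (u n)) \<longlonglongrightarrow> K a"
      unfolding K_def
    proof (rule integral_dominated_convergence[OF _ _ wi])
      show "AE s in lborel. (\<lambda>n. s powr (\<beta> - 1) * (if 0 < s \<and> s < u n then v (u n - s) else 0))
          \<longlonglongrightarrow> s powr (\<beta> - 1) * (if 0 < s \<and> s < a then v (a - s) else 0)"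
        using AE_lborel_singleton[of a]
        by eventually_elim (intro tendsto_mult_left tendsto_truncated_shift vc u[rule_format] a lim)
    qed (use u dom in auto)
  qed
  then show ?thesis by (simp add: kernel_integral_reflect K_def)
qed

lemma frac_int_LinfD:
  assumes b: "1/2 < \<beta>" and g: "L2D g"
  shows "LinfD (frac_int \<beta> g)"
proof -
  define C where "C = \<bar>1 / Gamma \<beta>\<bar> * (Beta (2*\<beta> - 1) 1 + (LINT t:dom01|lborel. (g t)\<^sup>2))"
  have "\<bar>frac_int \<beta> g x\<bar> \<le> C" if "x \<in> dom01" for x
    unfolding frac_int_def C_def abs_mult
    by (rule mult_left_mono[OF frac_kernel_L2_bound[OF b g]]) (use that in auto)
  then show ?thesis
    unfolding LinfD_def using frac_int_measurable[OF L2D_measurable[OF g]] by auto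
qed

lemma frac_int_cong:
  assumes "\<And>t. 0 < t \<Longrightarrow> t < x \<Longrightarrow> g t = h t"
  shows "frac_int a g x = frac_int a h x"
  unfolding frac_int_def
  by (intro arg_cong[where f="\<lambda>y. _ * y"] set_lebesgue_integral_cong) (auto simp: assms)

lemma continuous_on_frac_int:
  assumes "0 < \<beta>" "v \<in> borel_measurable borel" "continuous_on {0..1} v"
  shows "continuous_on {0..1} (frac_int \<beta> v)"
  unfolding frac_int_def by (intro continuous_intros continuous_on_kernel_integral assms)

lemma frac_kernel_mult_integrable:
  fixes k :: "real \<Rightarrow> real"
  assumes a: "0 < a" and x: "0 < x" "x \<le> 1" and k: "continuous_on {0..1} k"
  shows "set_integrable lborel {0<..<x} (\<lambda>s. (x - s) powr (a - 1) * k s)"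
proof -
  have "set_integrable lborel {0<..<x} (\<lambda>s. (x - s) powr (a - 1) * (s - 0) powr (1 - 1))"
    using Beta_integral_shifted(1)[OF a zero_less_one x(1)] .
  then have ki: "set_integrable lborel {0<..<x} (\<lambda>s. (x - s) powr (a - 1))"
    by (rule set_integrable_cong[THEN iffD1, rotated -1]) auto
  obtain B where B: "\<And>s. s \<in> {0..1} \<Longrightarrow> \<bar>k s\<bar> \<le> B"
    using continuous_on_compact_bound[OF compact_Icc k] by (metis real_norm_def)
  have "set_borel_measurable lborel {0<..<x} k"
    by (rule set_borel_measurable_continuous_on_subset[OF k]) (use x in auto)
  moreover have "AE s in lborel. s \<in> {0<..<x} \<longrightarrow> \<bar>k s\<bar> \<le> B"
    using B x by auto
  ultimately show ?thesis
    using set_integrable_mult_bounded[OF ki] by (simp add: mult.commute)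
qed

lemma frac_int_diff_cmult:
  assumes "set_integrable lborel {0<..<x} (\<lambda>s. (x - s) powr (a - 1) * f s)"
    and "set_integrable lborel {0<..<x} (\<lambda>s. (x - s) powr (a - 1) * g s)"
  shows "frac_int a (\<lambda>s. f s - c * g s) x = frac_int a f x - c * frac_int a g x"
proof -
  have "(LINT s:{0<..<x}|lborel. (x - s) powr (a - 1) * (f s - c * g s))
      = (LINT s:{0<..<x}|lborel. (x - s) powr (a - 1) * f s - c * ((x - s) powr (a - 1) * g s))"
    by (simp add: algebra_simps)
  also have "\<dots> = (LINT s:{0<..<x}|lborel. (x - s) powr (a - 1) * f s)
      - c * (LINT s:{0<..<x}|lborel. (x - s) powr (a - 1) * g s)"
    using assms by (simp add: set_integral_diff)
  finally have eq: "(LINT s:{0<..<x}|lborel. (x - s) powr (a - 1) * (f s - c * g s))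
      = (LINT s:{0<..<x}|lborel. (x - s) powr (a - 1) * f s)
      - c * (LINT s:{0<..<x}|lborel. (x - s) powr (a - 1) * g s)" .
  show ?thesis unfolding frac_int_def by (subst eq) (simp add: algebra_simps)
qed

lemma frac_int_frac_int_complement:
  assumes a: "0 < a" and b: "0 < b" and ab: "a + b = 1"
    and v: "v \<in> borel_measurable borel" and vc: "continuous_on {0..1} v"
    and x: "0 < x" "x \<le> 1"
  shows "frac_int a (frac_int b v) x = (LINT t:{0<..<x}|lborel. v t)"
proof -
  define J where "J s = (LINT t:{0<..<s}|lborel. (s - t) powr (b - 1) * v t)" for s
  have "frac_int a (frac_int b v) x
      = 1 / Gamma a * (LINT s:{0<..<x}|lborel. 1 / Gamma b * ((x - s) powr (a - 1) * J s))"
    unfolding frac_int_def J_def by (simp add: mult_ac)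
  also have "\<dots> = 1 / (Gamma a * Gamma b) * (Beta a b * (LINT t:{0<..<x}|lborel. v t))"
    using iterated_kernel_integral[OF a b ab v vc x] by (simp add: J_def)
  also have "Beta a b = Gamma a * Gamma b"
    using ab by (simp add: Beta_def)
  finally show ?thesis using Gamma_real_pos[OF a] Gamma_real_pos[OF b] by simp
qed

lemma frac_int_powr:
  assumes a: "0 < a" and \<mu>: "-1 < \<mu>" and x: "0 < x"
  shows "frac_int a (\<lambda>s. s powr \<mu>) x = Gamma (\<mu> + 1) / Gamma (\<mu> + 1 + a) * x powr (\<mu> + a)"
proof -
  have "(LINT s:{0<..<x}|lborel. (x - s) powr (a - 1) * s powr \<mu>)
      = (LINT s:{0<..<x}|lborel. (x - s) powr (a - 1) * (s - 0) powr ((\<mu> + 1) - 1))"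
    by (rule set_lebesgue_integral_cong) auto
  also have "\<dots> = Beta a (\<mu> + 1) * x powr (\<mu> + a)"
    using Beta_integral_shifted(2)[of a "\<mu> + 1" 0 x] a \<mu> x by (simp add: algebra_simps)
  finally show ?thesis
    unfolding frac_int_def Beta_def using Gamma_real_pos[OF a] by (simp add: algebra_simps)
qed

locale weak_fractional_bvp =
  fixes \<alpha> \<mu> c0 :: real and f q p w dw :: "real \<Rightarrow> real"
  assumes alpha: "3/2 < \<alpha>" "\<alpha> < 2"
    and mu: "\<mu> \<ge> \<alpha>"
    and f: "L2D f" and q: "LinfD q"
    and c0: "c0 = Gamma (\<mu> + 1) / Gamma (1 + \<mu> - \<alpha>)"
    and p: "p = (\<lambda>x. c0 * x powr (\<mu> - \<alpha>) - q x * x powr \<mu>)"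
    and w: "H10 w dw"
    and weak: "\<And>\<phi> d\<phi>. H10 \<phi> d\<phi> \<Longrightarrow> Aform \<alpha> q p dw \<phi> d\<phi> = ip f \<phi>"
begin

abbreviation Dw :: "real \<Rightarrow> real" where "Dw \<equiv> rl_D2a \<alpha> dw"

text \<open>This is \<open>G\<close>; the indicator makes it Borel measurable on all of \<open>\<real>\<close>, as the
  parametric integrals below require.\<close>
definition load :: "real \<Rightarrow> real" where
  "load s = indicator dom01 s * (f s - q s * Dw s - Dw 1 * p s)"

lemma dw_L2D: "L2D dw"
  using w by (simp add: H10_def)

lemma Dw_LinfD: "LinfD Dw"
  unfolding rl_D2a_def using alpha by (intro frac_int_LinfD dw_L2D) auto

lemma p_LinfD: "LinfD p"
  unfolding p using mu alpha by (intro LinfD_diff LinfD_mult LinfD_const LinfD_powr q) auto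

lemma load_integrable: "set_integrable lborel dom01 load"
proof -
  have "set_integrable lborel dom01 (\<lambda>s. f s - q s * Dw s - Dw 1 * p s)"
    using L2D_imp_integrable[OF f] LinfD_mult_integrable[OF q LinfD_imp_integrable[OF Dw_LinfD]]
      LinfD_imp_integrable[OF p_LinfD] by auto
  then show ?thesis
    by (rule set_integrable_cong[THEN iffD1, rotated -1]) (auto simp: load_def)
qed

lemma load_measurable [measurable]: "load \<in> borel_measurable borel"
proof -
  have "(\<lambda>x. indicator dom01 x *\<^sub>R load x) \<in> borel_measurable lborel"
    using load_integrable unfolding set_integrable_def by (rule borel_measurable_integrable)
  moreover have "(\<lambda>x. indicator dom01 x *\<^sub>R load x) = load"
    by (auto simp: load_def indicator_def)
  ultimately show ?thesis by simp
qed

lemma weak_eq_load: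
  assumes H: "H10 \<phi> d\<phi>" shows "ip dw d\<phi> = ip load \<phi>"
proof -
  have \<phi>: "LinfD \<phi>" by (rule continuous_on_imp_LinfD[OF H10_continuous[OF H]])
  have i_f: "set_integrable lborel dom01 (\<lambda>x. f x * \<phi> x)"
    using LinfD_mult_integrable[OF \<phi> L2D_imp_integrable[OF f]] by (simp add: mult.commute)
  have i_q: "set_integrable lborel dom01 (\<lambda>x. Dw x * (q x * \<phi> x))"
    using LinfD_mult_integrable[OF LinfD_mult[OF q \<phi>] LinfD_imp_integrable[OF Dw_LinfD]]
    by (simp add: mult_ac)
  have i_p: "set_integrable lborel dom01 (\<lambda>x. p x * \<phi> x)"
    using LinfD_mult_integrable[OF \<phi> LinfD_imp_integrable[OF p_LinfD]] by (simp add: mult.commute)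
  have A: "ip dw d\<phi> + ip Dw (\<lambda>x. q x * \<phi> x) + Dw 1 * ip p \<phi> = ip f \<phi>"
    using weak[OF H] by (simp add: Aform_def)
  have "ip load \<phi> = (LINT x:dom01|lborel. (f x * \<phi> x - Dw x * (q x * \<phi> x)) - Dw 1 * (p x * \<phi> x))"
    unfolding ip_def load_def by (rule set_lebesgue_integral_cong) (auto simp: algebra_simps)
  also have "\<dots> = ip f \<phi> - ip Dw (\<lambda>x. q x * \<phi> x) - Dw 1 * ip p \<phi>"
    using i_f i_q i_p by (simp add: ip_def set_integral_diff)
  finally show ?thesis using A by simp
qed

lemma dw_ae_eq_primitive_load:
  "\<exists>m. AE t in lborel. t \<in> dom01 \<longrightarrow> dw t = m - (LINT s:{0<..<t}|lborel. load s)"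
  by (rule du_Bois_Reymond[OF dw_L2D load_integrable weak_eq_load])

end

locale weak_fractional_bvp_regular = weak_fractional_bvp +
  fixes m :: real
  assumes dw_ae: "AE t in lborel. t \<in> dom01 \<longrightarrow> dw t = m - (LINT s:{0<..<t}|lborel. load s)"
begin

definition v :: "real \<Rightarrow> real" where "v t = m - (LINT s:{0<..<t}|lborel. load s)"

definition u :: "real \<Rightarrow> real" where "u = (\<lambda>x. Dw x - Dw 1 * x powr \<mu>)"

definition h :: "real \<Rightarrow> real" where "h x = q x * u x - f x"

lemma v_measurable [measurable]: "v \<in> borel_measurable borel"
proof -
  have "(\<lambda>t. LINT s|lborel. (if 0 < s \<and> s < t then load s else 0)) \<in> borel_measurable borel"
    by measurable
  then show ?thesis unfolding v_def set_lebesgue_integral_Ioo_eq_if by measurable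
qed

lemma v_continuous: "continuous_on {0..1} v"
  unfolding v_def by (intro continuous_intros continuous_on_primitive_Icc01 load_integrable)

lemma dw_ae_eq_v: "AE t in lborel. t \<in> dom01 \<longrightarrow> dw t = v t"
  using dw_ae by (simp add: v_def)

lemma Dw_eq_frac_int_v: "x \<le> 1 \<Longrightarrow> Dw x = frac_int (\<alpha> - 1) v x"
  unfolding rl_D2a_def frac_int_def
  by (subst set_integral_Ioo_cong_AE[OF L2D_measurable[OF dw_L2D] v_measurable _ dw_ae_eq_v]) auto

lemma w_eq_primitive_v: "x \<in> {0..1} \<Longrightarrow> w x = (LINT t:{0<..<x}|lborel. v t)"
  using w set_integral_Ioo_cong_AE[OF L2D_measurable[OF dw_L2D] v_measurable _ dw_ae_eq_v, of "\<lambda>t. 1" x]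
  by (simp add: H10_def)

lemma u_continuous: "continuous_on {0..1} u"
proof -
  have "continuous_on {0..1} Dw"
    using continuous_on_frac_int[OF _ v_measurable v_continuous, of "\<alpha> - 1"] alpha
    by (auto intro: continuous_on_eq simp: Dw_eq_frac_int_v)
  then show ?thesis
    unfolding u_def using mu alpha by (intro continuous_intros continuous_on_powr') auto
qed

lemma u_0: "u 0 = 0"
  using mu alpha by (simp add: u_def rl_D2a_def frac_int_def set_lebesgue_integral_def)

lemma u_1: "u 1 = 0"
  by (simp add: u_def)

lemma h_L2D: "L2D h"
  unfolding h_def
  by (intro L2D_diff f LinfD_imp_L2D LinfD_mult q continuous_on_imp_LinfD u_continuous)

lemma frac_int_u:
  assumes x: "x \<in> dom01"
  shows "frac_int (2 - \<alpha>) u x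
    = w x - Dw 1 * c0 / ((\<mu> + 1 - \<alpha>) * (\<mu> + 2 - \<alpha>)) * x powr (\<mu> + 2 - \<alpha>)"
proof -
  have a: "0 < 2 - \<alpha>" and \<beta>: "0 < \<alpha> - 1" and z: "0 < \<mu> + 1 - \<alpha>"
    using alpha mu by auto
  have "frac_int (2 - \<alpha>) u x = frac_int (2 - \<alpha>) (\<lambda>s. frac_int (\<alpha> - 1) v s - Dw 1 * s powr \<mu>) x"
    by (rule frac_int_cong) (use x in \<open>auto simp: u_def Dw_eq_frac_int_v\<close>)
  also have "\<dots> = frac_int (2 - \<alpha>) (frac_int (\<alpha> - 1) v) x - Dw 1 * frac_int (2 - \<alpha>) (\<lambda>s. s powr \<mu>) x"
    using x mu alpha
    by (intro frac_int_diff_cmult frac_kernel_mult_integrable continuous_on_frac_int a \<beta>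
        v_measurable v_continuous continuous_on_powr' continuous_intros) auto
  also have "frac_int (2 - \<alpha>) (frac_int (\<alpha> - 1) v) x = w x"
    using frac_int_frac_int_complement[OF a \<beta> _ v_measurable v_continuous] x w_eq_primitive_v by auto
  also have "frac_int (2 - \<alpha>) (\<lambda>s. s powr \<mu>) x
      = Gamma (\<mu> + 1) / Gamma ((\<mu> + 1 - \<alpha>) + 1 + 1) * x powr (\<mu> + 2 - \<alpha>)"
    using frac_int_powr[OF a] mu alpha x by (auto simp: algebra_simps)
  also have "Gamma ((\<mu> + 1 - \<alpha>) + 1 + 1) = (\<mu> + 2 - \<alpha>) * ((\<mu> + 1 - \<alpha>) * Gamma (1 + \<mu> - \<alpha>))"
  proof -
    have "Gamma ((\<mu> + 1 - \<alpha>) + 1 + 1) = ((\<mu> + 1 - \<alpha>) + 1) * Gamma ((\<mu> + 1 - \<alpha>) + 1)"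
      by (rule Gamma_plus1_real) (use z in simp)
    also have "Gamma ((\<mu> + 1 - \<alpha>) + 1) = (\<mu> + 1 - \<alpha>) * Gamma (\<mu> + 1 - \<alpha>)"
      by (rule Gamma_plus1_real[OF z])
    finally show ?thesis by (simp add: algebra_simps)
  qed
  finally show ?thesis
    using c0 Gamma_real_pos[OF z] z by (simp add: field_simps)
qed

lemma load_eq:
  assumes "x \<in> dom01"
  shows "load x = f x - q x * u x - Dw 1 * c0 * x powr (\<mu> - \<alpha>)"
  unfolding load_def using assms by (simp add: u_def p algebra_simps)

definition dIu :: "real \<Rightarrow> real" where
  "dIu x = v x - Dw 1 * c0 / (\<mu> + 1 - \<alpha>) * x powr (\<mu> + 1 - \<alpha>)"

lemma dIu_integrable: "set_integrable lborel dom01 dIu"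
proof -
  have "continuous_on {0..1} dIu"
    unfolding dIu_def using mu
    by (intro continuous_on_diff continuous_on_mult continuous_on_const v_continuous
        continuous_on_powr' continuous_on_id) auto
  then show ?thesis by (intro LinfD_imp_integrable continuous_on_imp_LinfD)
qed

lemma frac_int_u_eq_primitive_dIu:
  assumes x: "x \<in> dom01"
  shows "frac_int (2 - \<alpha>) u x = (LINT t:{0<..<x}|lborel. dIu t)"
proof -
  define e where "e = \<mu> + 1 - \<alpha>"
  have e: "1 \<le> e" using mu by (simp add: e_def)
  have "(LINT t:{0<..<x}|lborel. dIu t)
      = (LINT t:{0<..<x}|lborel. v t) - Dw 1 * c0 / e * (LINT t:{0<..<x}|lborel. t powr e)"
    unfolding dIu_def e_def[symmetric] using x e set_integral_powr_Ioo(1)[of e x]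
      set_integrable_initial_segment[OF LinfD_imp_integrable[OF continuous_on_imp_LinfD[OF v_continuous]], of x]
    by (simp add: set_integral_diff)
  also have "\<dots> = w x - Dw 1 * c0 / e * (x powr (e + 1) / (e + 1))"
    using set_integral_powr_Ioo(2)[of e x] x e w_eq_primitive_v[of x] by simp
  finally show ?thesis
    using frac_int_u[OF x] by (simp add: e_def field_simps)
qed

lemma dIu_eq_primitive_h:
  assumes x: "x \<in> dom01"
  shows "dIu x = m + (LINT t:{0<..<x}|lborel. h t)"
proof -
  define e where "e = \<mu> + 1 - \<alpha>"
  have e: "1 \<le> e" using mu by (simp add: e_def)
  have li: "set_integrable lborel {0<..<x} load"
    using set_integrable_initial_segment[OF load_integrable, of x] x by simp
  have pi: "set_integrable lborel {0<..<x} (\<lambda>t. t powr (e - 1))"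
    using set_integral_powr_Ioo(1)[of "e - 1" x] x e by simp
  have "(LINT t:{0<..<x}|lborel. h t) = (LINT t:{0<..<x}|lborel. - load t - Dw 1 * c0 * t powr (e - 1))"
    by (rule set_lebesgue_integral_cong) (use x in \<open>auto simp: h_def load_eq e_def\<close>)
  also have "\<dots> = - (LINT t:{0<..<x}|lborel. load t) - Dw 1 * c0 * (x powr e / e)"
    using set_integral_diff(2)[OF set_integrable_mult_right[of "-1", OF li]
        set_integrable_mult_right[OF pi, of "Dw 1 * c0"]]
      set_integral_uminus[OF li] set_integral_powr_Ioo(2)[of "e - 1" x] x e
    by simp
  finally show ?thesis by (simp add: dIu_def v_def e_def)
qed

lemma RL_deriv_u: "RL_deriv_is \<alpha> u h"
  unfolding RL_deriv_is_def
  using dIu_integrable L2D_imp_integrable[OF h_L2D] frac_int_u_eq_primitive_dIu dIu_eq_primitive_h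
  by (metis add_0)

lemma strong_solution:
  "let u = (\<lambda>x. rl_D2a \<alpha> dw x - rl_D2a \<alpha> dw 1 * x powr \<mu>) in
     L2D u \<and> continuous_on {0..1} u \<and> u 0 = 0 \<and> u 1 = 0 \<and>
     (\<exists>h. L2D h \<and> RL_deriv_is \<alpha> u h \<and>
          (AE x in lborel. x \<in> dom01 \<longrightarrow> - h x + q x * u x = f x))"
  unfolding Let_def u_def[symmetric]
  using LinfD_imp_L2D[OF continuous_on_imp_LinfD[OF u_continuous]] u_continuous u_0 u_1 h_L2D RL_deriv_u
  by (auto simp: h_def)

end

theorem theorem3p4:
  fixes \<alpha> \<mu> c0 :: real and f q p w dw :: "real \<Rightarrow> real"
  assumes alpha: "3/2 < \<alpha>" "\<alpha> < 2"
    and mu: "\<mu> \<ge> \<alpha>"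
    and f: "L2D f" and q: "LinfD q"
    and c0: "c0 = Gamma (\<mu> + 1) / Gamma (1 + \<mu> - \<alpha>)"
    and p: "p = (\<lambda>x. c0 * x powr (\<mu> - \<alpha>) - q x * x powr \<mu>)"
    and inj1: "\<And>v dv. H10 v dv \<Longrightarrow>
                 (\<forall>\<phi> d\<phi>. H10 \<phi> d\<phi> \<longrightarrow> Aform \<alpha> q p dv \<phi> d\<phi> = 0) \<Longrightarrow>
                 (\<forall>x\<in>{0..1}. v x = 0)"
    and inj2: "\<And>v dv. H10 v dv \<Longrightarrow>
                 (\<forall>\<psi> d\<psi>. H10 \<psi> d\<psi> \<longrightarrow> Aform \<alpha> q p d\<psi> v dv = 0) \<Longrightarrow>
                 (\<forall>x\<in>{0..1}. v x = 0)"
    and w: "H10 w dw"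
    and weak: "\<And>\<phi> d\<phi>. H10 \<phi> d\<phi> \<Longrightarrow> Aform \<alpha> q p dw \<phi> d\<phi> = ip f \<phi>"
  shows "let u = (\<lambda>x. rl_D2a \<alpha> dw x - rl_D2a \<alpha> dw 1 * x powr \<mu>) in
           L2D u \<and> continuous_on {0..1} u \<and> u 0 = 0 \<and> u 1 = 0 \<and>
           (\<exists>h. L2D h \<and> RL_deriv_is \<alpha> u h \<and>
                (AE x in lborel. x \<in> dom01 \<longrightarrow> - h x + q x * u x = f x))"
proof -
  interpret weak_fractional_bvp \<alpha> \<mu> c0 f q p w dw
    using alpha mu f q c0 p w weak by unfold_locales
  obtain m where "AE t in lborel. t \<in> dom01 \<longrightarrow> dw t = m - (LINT s:{0<..<t}|lborel. load s)"
    using dw_ae_eq_primitive_load by blast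
  then interpret weak_fractional_bvp_regular \<alpha> \<mu> c0 f q p w dw m
    by unfold_locales
  show ?thesis by (rule strong_solution)
qed

end
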